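(* Let $r\in(R_c,R_0)$ and $\mathcal{F}\in\mathbb{R}$, and define $\kappa(s;r)=2(\mathcal{F}-\sigma(s;r))-(r-R(s))^2$ for $s>s_0$. Then $s\mapsto\kappa(s;r)$ is decreasing on $(s_0,s_-(r))$, increasing on $(s_-(r),s_+(r))$, and decreasing to $-\infty$ on $(s_+(r),+\infty)$.
   Context: Let $\omega:[0,1]\to\mathbb{R}$ be continuous, $\Omega(p)=\int_0^p\omega$, $s_0=\sqrt{\max_{[0,1]}2\Omega}$. For $s>s_0$: $H(p;s)=\int_0^p(s^2-2\Omega(\tau))^{-1/2}d\tau$, $d(s)=H(1;s)$, $R(s)=\tfrac12s^2-\Omega(1)+d(s)$. Let $s_c>s_0$ satisfy $\int_0^1(s_c^2-2\Omega)^{-3/2}dp=1$; $R$ decreases on $(s_0,s_c)$, increases to $+\infty$ on $(s_c,\infty)$; $R_c=R(s_c)$, $R_0=\lim_{s\to s_0+}R(s)\in(R_c,+\infty]$; for $r\in(R_c,R_0)$, $s_-(r)<s_c<s_+(r)$ are the two roots of $R(s)=r$. Also $\sigma(s;r)=\int_0^1\big(\frac{1}{2H_p(p;s)^2}-H(p;s)-\Omega(p)+\Omega(1)+r\big)H_p(p;s)\,dp$. In the paper $\mathcal{F}$ is the flow force constant of a given solution, but the statement holds for any fixed real $\mathcal{F}$. *)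

theory Defs
  imports "HOL-Analysis.Analysis"
begin

definition Omg :: "(real \<Rightarrow> real) \<Rightarrow> real \<Rightarrow> real" where
  "Omg \<omega> p = integral {0..p} \<omega>"

definition s0 :: "(real \<Rightarrow> real) \<Rightarrow> real" where
  "s0 \<omega> = sqrt (Sup ((\<lambda>p. 2 * Omg \<omega> p) ` {0..1}))"

definition Hp :: "(real \<Rightarrow> real) \<Rightarrow> real \<Rightarrow> real \<Rightarrow> real" where
  "Hp \<omega> p s = (s\<^sup>2 - 2 * Omg \<omega> p) powr (-1/2)"

definition H :: "(real \<Rightarrow> real) \<Rightarrow> real \<Rightarrow> real \<Rightarrow> real" where
  "H \<omega> p s = integral {0..p} (\<lambda>\<tau>. (s\<^sup>2 - 2 * Omg \<omega> \<tau>) powr (-1/2))"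

definition dd :: "(real \<Rightarrow> real) \<Rightarrow> real \<Rightarrow> real" where
  "dd \<omega> s = H \<omega> 1 s"

definition RR :: "(real \<Rightarrow> real) \<Rightarrow> real \<Rightarrow> real" where
  "RR \<omega> s = s\<^sup>2 / 2 - Omg \<omega> 1 + dd \<omega> s"

definition R0 :: "(real \<Rightarrow> real) \<Rightarrow> ereal" where
  "R0 \<omega> = Lim (at_right (s0 \<omega>)) (\<lambda>s. ereal (RR \<omega> s))"

definition sigma :: "(real \<Rightarrow> real) \<Rightarrow> real \<Rightarrow> real \<Rightarrow> real" where
  "sigma \<omega> s r = integral {0..1} (\<lambda>p.
     (1 / (2 * (Hp \<omega> p s)\<^sup>2) - H \<omega> p s - Omg \<omega> p + Omg \<omega> 1 + r) * Hp \<omega> p s)"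

definition kappa :: "(real \<Rightarrow> real) \<Rightarrow> real \<Rightarrow> real \<Rightarrow> real \<Rightarrow> real" where
  "kappa \<omega> F r s = 2 * (F - sigma \<omega> s r) - (r - RR \<omega> s)\<^sup>2"

end

theory Submission
  imports Defs "HOL-Real_Asymp.Real_Asymp"
begin

text \<open>Write \<open>A(p,s) = s\<^sup>2 - 2\<Omega>(p)\<close>, positive for \<open>s > s\<^sub>0\<close>. Since \<open>H\<^sub>p = A\<^bsup>-1/2\<^esup>\<close> and
  \<open>\<integral>\<^sub>0\<^sup>1 H H\<^sub>p dp = d\<^sup>2/2\<close>, one gets \<open>\<sigma>(s;r) = \<integral>\<^sub>0\<^sup>1 A\<^bsup>1/2\<^esup> - d\<^sup>2/2 + (r - q) d\<close> with
  \<open>q(s) = s\<^sup>2/2 - \<Omega>(1)\<close>; as \<open>R = q + d\<close>, all terms in \<open>d\<close> cancel in \<open>\<kappa>\<close>, leaving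
  \<open>\<kappa>(s;r) = 2\<F> - 2\<integral>\<^sub>0\<^sup>1 A\<^bsup>1/2\<^esup> - (r - q)\<^sup>2\<close>. Differentiating under the integral sign gives
  \<open>\<kappa>' = 2s(r - R)\<close>, so \<kappa> decreases exactly where \<open>R > r\<close>; and \<open>R' = s(1 - \<integral>\<^sub>0\<^sup>1 A\<^bsup>-3/2\<^esup>)\<close>
  with \<open>\<integral>\<^sub>0\<^sup>1 A\<^bsup>-3/2\<^esup>\<close> strictly decreasing in \<open>s\<close>, which fixes the sign of \<open>R - r\<close> on
  each of the three intervals. Finally \<open>\<kappa> \<le> 2\<F> - (r - q)\<^sup>2 \<rightarrow> -\<infinity>\<close>.\<close>

abbreviation gap :: "(real \<Rightarrow> real) \<Rightarrow> real \<Rightarrow> real \<Rightarrow> real" where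
  "gap \<omega> s p \<equiv> s\<^sup>2 - 2 * Omg \<omega> p"

definition gap_powr_integral :: "(real \<Rightarrow> real) \<Rightarrow> real \<Rightarrow> real \<Rightarrow> real" where
  "gap_powr_integral \<omega> c s = integral {0..1} (\<lambda>p. gap \<omega> s p powr c)"

lemma continuous_on_Omg:
  assumes "continuous_on {0..1} \<omega>"
  shows "continuous_on {0..1} (Omg \<omega>)"
  unfolding Omg_def[abs_def]
  by (rule indefinite_integral_continuous_1[OF integrable_continuous_interval[OF assms]])

lemma s0_nonneg_and_Omg_le:
  assumes "continuous_on {0..1} \<omega>"
  shows s0_nonneg: "0 \<le> s0 \<omega>"
    and Omg_le_s0: "p \<in> {0..1} \<Longrightarrow> 2 * Omg \<omega> p \<le> (s0 \<omega>)\<^sup>2"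
proof -
  let ?S = "(\<lambda>p. 2 * Omg \<omega> p) ` {0..1}"
  have "bdd_above ?S"
    by (intro bounded_imp_bdd_above compact_imp_bounded compact_continuous_image
        continuous_intros continuous_on_Omg assms compact_Icc)
  moreover have "0 \<in> ?S"
    by (force simp: Omg_def)
  ultimately have "0 \<le> Sup ?S" and "p \<in> {0..1} \<Longrightarrow> 2 * Omg \<omega> p \<le> Sup ?S"
    by (auto intro: cSup_upper)
  then show "0 \<le> s0 \<omega>" and "p \<in> {0..1} \<Longrightarrow> 2 * Omg \<omega> p \<le> (s0 \<omega>)\<^sup>2"
    by (simp_all add: s0_def)
qed

lemma gap_pos:
  assumes "continuous_on {0..1} \<omega>" "s0 \<omega> < s" "p \<in> {0..1}"
  shows "0 < gap \<omega> s p"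
proof -
  have "(s0 \<omega>)\<^sup>2 < s\<^sup>2"
    using assms s0_nonneg by (simp add: power_strict_mono)
  with Omg_le_s0[OF assms(1,3)] show ?thesis
    by linarith
qed

lemma continuous_on_gap_powr:
  assumes "continuous_on {0..1} \<omega>" "s0 \<omega> < s"
  shows "continuous_on {0..1} (\<lambda>p. gap \<omega> s p powr c)"
  using gap_pos[OF assms]
  by (intro continuous_on_powr continuous_intros continuous_on_Omg assms) force

lemma has_integral_gap_powr_integral:
  assumes "continuous_on {0..1} \<omega>" "s0 \<omega> < s"
  shows "((\<lambda>p. gap \<omega> s p powr c) has_integral gap_powr_integral \<omega> c s) {0..1}"
  unfolding gap_powr_integral_def
  by (intro integrable_integral integrable_continuous_interval continuous_on_gap_powr assms)

lemma gap_powr_integral_strict_antimono: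
  assumes "continuous_on {0..1} \<omega>" "c < 0" "s0 \<omega> < s" "s < t"
  shows "gap_powr_integral \<omega> c t < gap_powr_integral \<omega> c s"
  unfolding gap_powr_integral_def
proof (rule integral_less_real)
  fix p :: real assume "p \<in> {0<..<1}"
  then have "0 < gap \<omega> s p" "gap \<omega> s p < gap \<omega> t p"
    using gap_pos[OF assms(1,3)] assms(3,4) s0_nonneg[OF assms(1)]
    by (auto intro: power_strict_mono)
  then show "gap \<omega> t p powr c < gap \<omega> s p powr c"
    by (rule powr_less_mono2_neg[OF \<open>c < 0\<close>])
qed (use assms in \<open>auto intro: continuous_on_gap_powr\<close>)

lemma gap_powr_integral_pos:
  assumes "continuous_on {0..1} \<omega>" "s0 \<omega> < s"
  shows "0 < gap_powr_integral \<omega> c s"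
proof -
  have "integral {0..1} (\<lambda>_::real. 0::real) < gap_powr_integral \<omega> c s"
    unfolding gap_powr_integral_def
  proof (rule integral_less_real)
    fix p :: real assume "p \<in> {0<..<1}"
    then have "0 < gap \<omega> s p"
      by (intro gap_pos assms) simp
    then show "0 < gap \<omega> s p powr c"
      by simp
  qed (use assms in \<open>auto intro: continuous_on_gap_powr\<close>)
  then show ?thesis
    by simp
qed

lemma has_real_derivative_gap_powr_integral:
  assumes cont: "continuous_on {0..1} \<omega>" and s: "s0 \<omega> < s"
  shows "(gap_powr_integral \<omega> c has_real_derivative
           2 * c * s * gap_powr_integral \<omega> (c - 1) s) (at s)"
proof -
  let ?U = "{s0 \<omega><..}"
  have "((\<lambda>x. integral (cbox 0 1) (\<lambda>p. gap \<omega> x p powr c)) has_field_derivative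
         integral (cbox 0 1) (\<lambda>p. 2 * c * s * gap \<omega> s p powr (c - 1))) (at s within ?U)"
  proof (rule leibniz_rule_field_derivative)
    fix x p :: real assume "x \<in> ?U" "p \<in> cbox 0 1"
    then have "0 < gap \<omega> x p"
      using gap_pos[OF cont] by simp
    then show "((\<lambda>x. gap \<omega> x p powr c) has_field_derivative
                 2 * c * x * gap \<omega> x p powr (c - 1)) (at x within ?U)"
      by (auto intro!: derivative_eq_intros)
  next
    fix x assume "x \<in> ?U"
    then show "(\<lambda>p. gap \<omega> x p powr c) integrable_on cbox 0 1"
      using cont by (auto intro: integrable_continuous_interval continuous_on_gap_powr)
  next
    have "continuous_on (?U \<times> {0..1}) (\<lambda>(x, p). 2 * c * x * gap \<omega> x p powr (c - 1))"
      using gap_pos[OF cont]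
      by (auto simp: case_prod_beta intro!: continuous_on_powr continuous_intros
          continuous_on_compose2[OF continuous_on_Omg[OF cont] continuous_on_snd])
        (metis less_irrefl)
    then show "continuous_on (?U \<times> cbox 0 1) (\<lambda>(x, p). 2 * c * x * gap \<omega> x p powr (c - 1))"
      by simp
  qed (use s in auto)
  moreover have "at s within ?U = at s"
    using s by (intro at_within_open) auto
  ultimately show ?thesis
    by (simp add: gap_powr_integral_def[abs_def])
qed

lemma dd_eq_gap_powr_integral: "dd \<omega> s = gap_powr_integral \<omega> (-1/2) s"
  by (simp add: dd_def H_def gap_powr_integral_def)

lemma RR_eq: "RR \<omega> s = s\<^sup>2 / 2 - Omg \<omega> 1 + gap_powr_integral \<omega> (-1/2) s"
  by (simp add: RR_def dd_eq_gap_powr_integral)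

lemma has_real_derivative_RR:
  assumes "continuous_on {0..1} \<omega>" "s0 \<omega> < s"
  shows "(RR \<omega> has_real_derivative s * (1 - gap_powr_integral \<omega> (-3/2) s)) (at s)"
  unfolding RR_eq[abs_def]
  using has_real_derivative_gap_powr_integral[OF assms, of "-1/2"]
  by (auto intro!: derivative_eq_intros simp: algebra_simps)

lemma continuous_on_RR:
  assumes "continuous_on {0..1} \<omega>"
  shows "continuous_on {s0 \<omega><..} (RR \<omega>)"
  using has_real_derivative_RR[OF assms]
  by (intro continuous_at_imp_continuous_on ballI DERIV_isCont) auto

lemma RR_strict_antimono:
  assumes cont: "continuous_on {0..1} \<omega>" and sc: "gap_powr_integral \<omega> (-3/2) sc = 1"
    and "s0 \<omega> < x" "x < y" "y \<le> sc"
  shows "RR \<omega> y < RR \<omega> x"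
proof (rule DERIV_neg_imp_decreasing_open[OF \<open>x < y\<close>])
  fix z assume "x < z" "z < y"
  with assms have z: "s0 \<omega> < z" "z < sc"
    by auto
  then have "1 < gap_powr_integral \<omega> (-3/2) z"
    using gap_powr_integral_strict_antimono[OF cont, of "-3/2" z sc] sc by simp
  then have "z * (1 - gap_powr_integral \<omega> (-3/2) z) < 0"
    using z s0_nonneg[OF cont] by (simp add: mult_pos_neg)
  then show "\<exists>d. (RR \<omega> has_real_derivative d) (at z) \<and> d < 0"
    using has_real_derivative_RR[OF cont z(1)] by blast
next
  show "continuous_on {x..y} (RR \<omega>)"
    using assms by (intro continuous_on_subset[OF continuous_on_RR[OF cont]]) auto
qed

lemma RR_strict_mono:
  assumes cont: "continuous_on {0..1} \<omega>" and sc: "gap_powr_integral \<omega> (-3/2) sc = 1"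
    and "s0 \<omega> < sc" "sc \<le> x" "x < y"
  shows "RR \<omega> x < RR \<omega> y"
proof (rule DERIV_pos_imp_increasing_open[OF \<open>x < y\<close>])
  fix z assume "x < z" "z < y"
  with assms have z: "s0 \<omega> < z" "sc < z"
    by auto
  then have "gap_powr_integral \<omega> (-3/2) z < 1"
    using gap_powr_integral_strict_antimono[OF cont, of "-3/2" sc z] sc assms(3) by simp
  then have "0 < z * (1 - gap_powr_integral \<omega> (-3/2) z)"
    using z s0_nonneg[OF cont] by simp
  then show "\<exists>d. (RR \<omega> has_real_derivative d) (at z) \<and> 0 < d"
    using has_real_derivative_RR[OF cont z(1)] by blast
next
  show "continuous_on {x..y} (RR \<omega>)"
    using assms by (intro continuous_on_subset[OF continuous_on_RR[OF cont]]) auto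
qed

lemma has_integral_indefinite_integral_times:
  fixes h :: "real \<Rightarrow> real"
  assumes "continuous_on {a..b} h" "a \<le> b"
  shows "((\<lambda>p. integral {a..p} h * h p) has_integral (integral {a..b} h)\<^sup>2 / 2) {a..b}"
proof -
  have "((\<lambda>p. (integral {a..p} h)\<^sup>2 / 2) has_vector_derivative integral {a..x} h * h x)
          (at x within {a..b})" if "x \<in> {a..b}" for x
    unfolding has_real_derivative_iff_has_vector_derivative[symmetric]
    using integral_has_real_derivative[OF assms(1) that]
    by (auto intro!: derivative_eq_intros)
  from fundamental_theorem_of_calculus[OF assms(2) this] show ?thesis
    by simp
qed

lemma sigma_eq:
  assumes cont: "continuous_on {0..1} \<omega>" and s: "s0 \<omega> < s"
  shows "sigma \<omega> s r = gap_powr_integral \<omega> (1/2) s - (dd \<omega> s)\<^sup>2 / 2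
                         + (r - (s\<^sup>2 / 2 - Omg \<omega> 1)) * dd \<omega> s"
proof -
  define q where "q = s\<^sup>2 / 2 - Omg \<omega> 1"
  have H_eq: "H \<omega> p s = integral {0..p} (\<lambda>\<tau>. Hp \<omega> \<tau> s)" for p
    by (simp add: H_def Hp_def)
  have dd_eq: "dd \<omega> s = integral {0..1} (\<lambda>p. Hp \<omega> p s)"
    by (simp add: dd_def H_eq)
  have integrand: "(1 / (2 * (Hp \<omega> p s)\<^sup>2) - H \<omega> p s - Omg \<omega> p + Omg \<omega> 1 + r) * Hp \<omega> p s
      = gap \<omega> s p powr (1/2) - H \<omega> p s * Hp \<omega> p s + (r - q) * Hp \<omega> p s"
    if "p \<in> {0..1}" for p
  proof -
    have "0 < gap \<omega> s p"
      using gap_pos[OF cont s that] .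
    then show ?thesis
      by (simp add: Hp_def q_def powr_minus powr_half_sqrt field_simps)
  qed
  have "sigma \<omega> s r = integral {0..1}
          (\<lambda>p. gap \<omega> s p powr (1/2) - H \<omega> p s * Hp \<omega> p s + (r - q) * Hp \<omega> p s)"
    unfolding sigma_def q_def[symmetric] by (rule integral_cong) (rule integrand)
  also have "\<dots> = gap_powr_integral \<omega> (1/2) s - (dd \<omega> s)\<^sup>2 / 2 + (r - q) * dd \<omega> s"
  proof (rule integral_unique)
    show "((\<lambda>p. gap \<omega> s p powr (1/2) - H \<omega> p s * Hp \<omega> p s + (r - q) * Hp \<omega> p s) has_integral
          gap_powr_integral \<omega> (1/2) s - (dd \<omega> s)\<^sup>2 / 2 + (r - q) * dd \<omega> s) {0..1}"
      unfolding H_eq dd_eq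
      by (intro has_integral_add has_integral_diff has_integral_mult_right
          has_integral_gap_powr_integral has_integral_indefinite_integral_times
          integrable_integral integrable_continuous_interval cont s)
        (simp_all add: Hp_def continuous_on_gap_powr[OF cont s])
  qed
  finally show ?thesis
    by (simp add: q_def)
qed

lemma kappa_eq:
  assumes "continuous_on {0..1} \<omega>" "s0 \<omega> < s"
  shows "kappa \<omega> F r s = 2 * F - 2 * gap_powr_integral \<omega> (1/2) s - (r - (s\<^sup>2 / 2 - Omg \<omega> 1))\<^sup>2"
  using sigma_eq[OF assms, of r]
  by (simp add: kappa_def RR_def power2_eq_square algebra_simps)

lemma has_real_derivative_kappa:
  assumes cont: "continuous_on {0..1} \<omega>" and s: "s0 \<omega> < s"
  shows "(kappa \<omega> F r has_real_derivative 2 * s * (r - RR \<omega> s)) (at s)"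
proof -
  let ?K = "\<lambda>s. 2 * F - 2 * gap_powr_integral \<omega> (1/2) s - (r - (s\<^sup>2 / 2 - Omg \<omega> 1))\<^sup>2"
  have ev: "\<forall>\<^sub>F x in nhds s. kappa \<omega> F r x = ?K x"
    using eventually_nhds_in_open[of "{s0 \<omega><..}" s] s
    by (auto elim!: eventually_mono simp: kappa_eq[OF cont])
  have "(?K has_real_derivative 2 * s * (r - RR \<omega> s)) (at s)"
    using has_real_derivative_gap_powr_integral[OF cont s, of "1/2"]
    by (auto intro!: derivative_eq_intros simp: RR_eq algebra_simps power2_eq_square)
  then show ?thesis
    by (subst DERIV_cong_ev[OF refl ev refl])
qed

lemma kappa_strict_antimono:
  assumes cont: "continuous_on {0..1} \<omega>" and "s0 \<omega> < x" "x < y"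
    and above: "\<And>z. x \<le> z \<Longrightarrow> z \<le> y \<Longrightarrow> r < RR \<omega> z"
  shows "kappa \<omega> F r y < kappa \<omega> F r x"
proof (rule DERIV_neg_imp_decreasing[OF \<open>x < y\<close>])
  fix z assume z: "x \<le> z" "z \<le> y"
  then have "s0 \<omega> < z"
    using assms(2) by linarith
  moreover have "2 * z * (r - RR \<omega> z) < 0"
    using \<open>s0 \<omega> < z\<close> s0_nonneg[OF cont] above[OF z] by (simp add: mult_pos_neg)
  ultimately show "\<exists>d. (kappa \<omega> F r has_real_derivative d) (at z) \<and> d < 0"
    using has_real_derivative_kappa[OF cont] by blast
qed

lemma kappa_strict_mono:
  assumes cont: "continuous_on {0..1} \<omega>" and "s0 \<omega> < x" "x < y"
    and below: "\<And>z. x \<le> z \<Longrightarrow> z \<le> y \<Longrightarrow> RR \<omega> z < r"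
  shows "kappa \<omega> F r x < kappa \<omega> F r y"
proof (rule DERIV_pos_imp_increasing[OF \<open>x < y\<close>])
  fix z assume z: "x \<le> z" "z \<le> y"
  then have "s0 \<omega> < z"
    using assms(2) by linarith
  moreover have "0 < 2 * z * (r - RR \<omega> z)"
    using \<open>s0 \<omega> < z\<close> s0_nonneg[OF cont] below[OF z] by simp
  ultimately show "\<exists>d. (kappa \<omega> F r has_real_derivative d) (at z) \<and> 0 < d"
    using has_real_derivative_kappa[OF cont] by blast
qed

lemma filterlim_kappa_at_top:
  assumes "continuous_on {0..1} \<omega>"
  shows "filterlim (kappa \<omega> F r) at_bot at_top"
proof (rule filterlim_at_bot_mono)
  have "filterlim (\<lambda>s. 2 * F - (r - (s\<^sup>2 / 2 - c))\<^sup>2) at_bot at_top" for c :: real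
    by real_asymp
  then show "filterlim (\<lambda>s. 2 * F - (r - (s\<^sup>2 / 2 - Omg \<omega> 1))\<^sup>2) at_bot at_top" .
  show "\<forall>\<^sub>F s in at_top. kappa \<omega> F r s \<le> 2 * F - (r - (s\<^sup>2 / 2 - Omg \<omega> 1))\<^sup>2"
    using eventually_gt_at_top[of "s0 \<omega>"]
    by eventually_elim
      (use assms in \<open>auto simp: kappa_eq less_imp_le[OF gap_powr_integral_pos]\<close>)
qed

theorem lemma3p7:
  fixes \<omega> :: "real \<Rightarrow> real" and sc r F sm sp :: real
  assumes cont: "continuous_on {0..1} \<omega>"
    and sc_gt: "sc > s0 \<omega>"
    and sc_def: "integral {0..1} (\<lambda>p. (sc\<^sup>2 - 2 * Omg \<omega> p) powr (-3/2)) = 1"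
    and r_gt: "r > RR \<omega> sc"
    and r_lt: "ereal r < R0 \<omega>"
    and sm: "s0 \<omega> < sm" "sm < sc" "RR \<omega> sm = r"
    and sp: "sc < sp" "RR \<omega> sp = r"
  shows "(\<forall>x y. s0 \<omega> < x \<and> x < y \<and> y < sm \<longrightarrow> kappa \<omega> F r y < kappa \<omega> F r x)
       \<and> (\<forall>x y. sm < x \<and> x < y \<and> y < sp \<longrightarrow> kappa \<omega> F r x < kappa \<omega> F r y)
       \<and> (\<forall>x y. sp < x \<and> x < y \<longrightarrow> kappa \<omega> F r y < kappa \<omega> F r x)
       \<and> filterlim (kappa \<omega> F r) at_bot at_top"
proof -
  \<comment> \<open>\<open>r_gt\<close> and \<open>r_lt\<close> only guarantee that \<open>sm\<close> and \<open>sp\<close> exist.\<close>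
  have "gap_powr_integral \<omega> (-3/2) sc = 1"
    using sc_def by (simp add: gap_powr_integral_def)
  note RR_dec = RR_strict_antimono[OF cont this] and RR_inc = RR_strict_mono[OF cont this sc_gt]
  have "kappa \<omega> F r y < kappa \<omega> F r x" if "s0 \<omega> < x" "x < y" "y < sm" for x y
  proof (intro kappa_strict_antimono[OF cont])
    fix z assume "x \<le> z" "z \<le> y"
    then show "r < RR \<omega> z"
      using that sm RR_dec[of z sm] by auto
  qed (use that in auto)
  moreover have "kappa \<omega> F r x < kappa \<omega> F r y" if "sm < x" "x < y" "y < sp" for x y
  proof (intro kappa_strict_mono[OF cont])
    fix z assume "x \<le> z" "z \<le> y"
    then show "RR \<omega> z < r"
      using that sm sp RR_dec[of sm z] RR_inc[of z sp] by (cases "z \<le> sc") auto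
  qed (use that sm in auto)
  moreover have "kappa \<omega> F r y < kappa \<omega> F r x" if "sp < x" "x < y" for x y
  proof (intro kappa_strict_antimono[OF cont])
    fix z assume "x \<le> z" "z \<le> y"
    then show "r < RR \<omega> z"
      using that sp RR_inc[of sp z] by auto
  qed (use that sp sc_gt in auto)
  ultimately show ?thesis
    using filterlim_kappa_at_top[OF cont] by blast
qed

end
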